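(* Let $A(t)$ be a holomorphic $2\times2$ matrix function on $|t|\le1$ with $A(0)=\operatorname{diag}(1,-1)$. Let $$\dot z=\frac{A(t,\varepsilon)}{(t-\alpha_0(\varepsilon))(t-\alpha_1(\varepsilon))}\,z$$ be a generic deformation of $\dot z=t^{-2}A(t)z$ with $\operatorname{Im}\alpha_0(\varepsilon)>0$. Set $t_0=-\frac12$ and let $M_0,M_1$ be the monodromy operators of the perturbed equation on $H_{t_0}$, with eigenvalues $\lambda_{i1},\lambda_{i2}$ of $M_i$ numbered as in the context. Then, as $\varepsilon\to0$, $$\lambda_{01},\lambda_{12}\to\infty,\qquad \lambda_{02},\lambda_{11}\to 0,$$ $$\ln\lambda_{01}=-(1+o(1))\ln\lambda_{02}=-(1+o(1))\ln\lambda_{11}=(1+o(1))\ln\lambda_{12}.$$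
   Context: Deformation: $A(t,\varepsilon)$ is holomorphic in $t$ on $|t|\le1$ and continuous in $\varepsilon\ge0$, $A(t,0)=A(t)$; $\alpha_0,\alpha_1$ are continuous, $\alpha_0+\alpha_1\equiv0$, $\alpha_i(0)=0$, $\alpha_0(\varepsilon)\ne\alpha_1(\varepsilon)$ for $\varepsilon>0$. Generic: the line through $\alpha_0(\varepsilon),\alpha_1(\varepsilon)$ intersects the real axis at an angle bounded away from $0$ uniformly in $\varepsilon>0$. Monodromy: $H_{t_0}$ is the space of local solutions at $t_0$. For $i=0,1$, let $l_i$ be a small counterclockwise circle around $\alpha_i(\varepsilon)$ whose closed disc does not contain $\alpha_{1-i}(\varepsilon)$, and let $a_i=[t_0,\alpha_i]\cap l_i$. $M_i$ is the monodromy of the perturbed equation along $[t_0,a_i]\circ l_i\circ[t_0,a_i]^{-1}$. Numbering: let $\kappa_{i1}(\varepsilon),\kappa_{i2}(\varepsilon)$ be the eigenvalues of $A(\alpha_i(\varepsilon),\varepsilon)$, numbered so that $\kappa_{i1}\to1$ and $\kappa_{i2}\to-1$. The characteristic numbers of the Fuchsian point $\alpha_i$ are $\rho_{ij}=\kappa_{ij}/(\alpha_i-\alpha_{1-i})$. The eigenvalue of $M_i$ corresponding to $\rho_{ij}$ is $\lambda_{ij}=\exp(2\pi i\rho_{ij})$, and $\ln\lambda_{ij}$ denotes the determination $2\pi i\rho_{ij}$. *)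

theory Defs
  imports "HOL-Analysis.Analysis"
begin

definition eigenvalues2 :: "complex^2^2 \<Rightarrow> complex \<Rightarrow> complex \<Rightarrow> bool" where
  "eigenvalues2 M k1 k2 \<longleftrightarrow> (\<forall>x. det (mat x - M) = (x - k1) * (x - k2))"

definition char_number :: "complex \<Rightarrow> complex \<Rightarrow> complex \<Rightarrow> complex" where
  "char_number k ai aj = k / (ai - aj)"

definition mono_eig :: "complex \<Rightarrow> complex \<Rightarrow> complex \<Rightarrow> complex" where
  "mono_eig k ai aj = exp (2 * of_real pi * \<i> * char_number k ai aj)"

definition ln_mono_eig :: "complex \<Rightarrow> complex \<Rightarrow> complex \<Rightarrow> complex" where
  "ln_mono_eig k ai aj = 2 * of_real pi * \<i> * char_number k ai aj"

end

theory Submission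
  imports Defs
begin

text \<open>Because \<open>\<alpha>\<^sub>0 + \<alpha>\<^sub>1 = 0\<close>, every \<open>ln \<lambda>\<^sub>i\<^sub>j\<close> is \<open>\<plusminus>2\<pi>\<i> \<kappa>\<^sub>i\<^sub>j / (\<alpha>\<^sub>0 - \<alpha>\<^sub>1)\<close>, a multiple of the
  single quantity \<open>2\<pi>\<i> / (\<alpha>\<^sub>0 - \<alpha>\<^sub>1)\<close>. Genericity and \<open>Im \<alpha>\<^sub>0 > 0\<close> make \<open>z = \<alpha>\<^sub>0 - \<alpha>\<^sub>1\<close> tend
  to \<open>0\<close> inside a cone \<open>Im z \<ge> c |z|\<close>, where \<open>Re (\<i> \<kappa> / z) \<ge> c / (2 |z|) \<rightarrow> \<infinity>\<close> as soon as
  \<open>|\<kappa> - 1| \<le> c / 2\<close>. Hence \<open>|\<lambda>| = exp (Re ln \<lambda>)\<close> tends to \<open>\<infinity>\<close> or \<open>0\<close> according to the sign of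
  \<open>lim \<kappa>\<close> and the orientation of the difference, while the ratios of the logarithms are ratios
  of the \<open>\<kappa>\<close>'s, which tend to \<open>\<plusminus>1\<close>.\<close>

lemma ln_mono_eig_uminus: "ln_mono_eig (- k) a b = - ln_mono_eig k a b"
  by (simp add: ln_mono_eig_def char_number_def)

lemma ln_mono_eig_swap: "ln_mono_eig k b a = ln_mono_eig (- k) a b"
  unfolding ln_mono_eig_def char_number_def
  by (metis divide_minus_left divide_minus_right minus_diff_eq)

lemma mono_eig_eq_exp_ln_mono_eig: "mono_eig k a b = exp (ln_mono_eig k a b)"
  by (simp add: mono_eig_def ln_mono_eig_def)

lemma mono_eig_swap: "mono_eig k b a = mono_eig (- k) a b"
  unfolding mono_eig_eq_exp_ln_mono_eig ln_mono_eig_swap[of k b a] ..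

lemma Re_ln_mono_eig_ge:
  fixes k a b :: complex and c :: real
  assumes "a \<noteq> b" and "Im (a - b) \<ge> c * cmod (a - b)" and "cmod (k - 1) \<le> c / 2"
  shows "pi * c / cmod (a - b) \<le> Re (ln_mono_eig k a b)"
proof -
  define d where "d = a - b"
  have d_pos: "cmod d > 0"
    using assms(1) by (simp add: d_def)
  have "c / cmod d = c * cmod d / (cmod d)\<^sup>2"
    using d_pos by (simp add: power2_eq_square)
  also have "\<dots> \<le> Im d / (cmod d)\<^sup>2"
    using assms(2) by (simp add: d_def divide_right_mono)
  also have "\<dots> = Re (\<i> / d)"
    by (simp add: Re_divide cmod_power2)
  finally have main: "c / cmod d \<le> Re (\<i> / d)" .
  have "- Re (\<i> * (k - 1) / d) \<le> cmod (\<i> * (k - 1) / d)"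
    using abs_Re_le_cmod[of "\<i> * (k - 1) / d"] by (simp add: abs_le_iff)
  also have "\<dots> = cmod (k - 1) / cmod d"
    by (simp add: norm_divide norm_mult)
  also have "\<dots> \<le> c / 2 / cmod d"
    using assms(3) by (intro divide_right_mono) auto
  finally have error: "- (c / 2 / cmod d) \<le> Re (\<i> * (k - 1) / d)"
    by linarith
  have "\<i> * k / d = \<i> / d + \<i> * (k - 1) / d"
    by (simp add: add_divide_distrib[symmetric] algebra_simps)
  then have "c / 2 / cmod d \<le> Re (\<i> * k / d)"
    using main error by simp
  then have "2 * pi * (c / 2 / cmod d) \<le> 2 * pi * Re (\<i> * k / d)"
    using pi_gt_zero by (intro mult_left_mono) auto
  moreover have "ln_mono_eig k a b = (2 * pi) *\<^sub>R (\<i> * k / d)"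
    by (simp add: ln_mono_eig_def char_number_def d_def scaleR_conv_of_real)
  ultimately show ?thesis
    by (simp add: d_def)
qed

lemma filterlim_Re_ln_mono_eig_at_top:
  fixes k a b :: "'x \<Rightarrow> complex" and c :: real
  assumes "c > 0" and "(k \<longlongrightarrow> 1) F" and "((\<lambda>x. a x - b x) \<longlongrightarrow> 0) F"
    and "\<forall>\<^sub>F x in F. a x \<noteq> b x" and "\<forall>\<^sub>F x in F. Im (a x - b x) \<ge> c * cmod (a x - b x)"
  shows "filterlim (\<lambda>x. Re (ln_mono_eig (k x) (a x) (b x))) at_top F"
proof (rule filterlim_at_top_mono)
  have "filterlim (\<lambda>x. inverse (cmod (a x - b x))) at_top F"
    using assms(3,4) by (intro filterlim_inverse_at_top tendsto_norm_zero) (auto elim: eventually_mono)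
  then show "filterlim (\<lambda>x. (pi * c) * inverse (cmod (a x - b x))) at_top F"
    using assms(1) by (intro filterlim_tendsto_pos_mult_at_top[OF tendsto_const]) auto
  have "\<forall>\<^sub>F x in F. cmod (k x - 1) < c / 2"
    using assms(2) \<open>c > 0\<close> unfolding tendsto_iff dist_norm by (metis half_gt_zero)
  with assms(4,5) show "\<forall>\<^sub>F x in F. (pi * c) * inverse (cmod (a x - b x)) \<le> Re (ln_mono_eig (k x) (a x) (b x))"
    by eventually_elim (metis Re_ln_mono_eig_ge divide_inverse less_imp_le)
qed

lemma filterlim_exp_at_infinity_if_Re_at_top:
  fixes f :: "'x \<Rightarrow> complex"
  assumes "filterlim (\<lambda>x. Re (f x)) at_top F"
  shows "filterlim (\<lambda>x. exp (f x)) at_infinity F"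
  unfolding filterlim_at_infinity_conv_norm_at_top norm_exp_eq_Re
  using filterlim_compose[OF exp_at_top assms] .

lemma tendsto_exp_zero_if_Re_at_top:
  fixes f :: "'x \<Rightarrow> complex"
  assumes "filterlim (\<lambda>x. Re (f x)) at_top F"
  shows "((\<lambda>x. exp (- f x)) \<longlongrightarrow> 0) F"
proof (rule tendsto_norm_zero_cancel)
  have "filterlim (\<lambda>x. - Re (f x)) at_bot F"
    using assms by (simp add: filterlim_uminus_at_bot)
  then show "((\<lambda>x. norm (exp (- f x))) \<longlongrightarrow> 0) F"
    unfolding norm_exp_eq_Re by (simp add: filterlim_compose[OF exp_at_bot])
qed

lemma ln_mono_eig_asymp_proportional:
  fixes k1 k2 a b :: "'x \<Rightarrow> complex"
  assumes "(k1 \<longlongrightarrow> L) F" and "(k2 \<longlongrightarrow> L) F" and "L \<noteq> 0"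
  shows "\<exists>h. (h \<longlongrightarrow> 0) F \<and> (\<forall>\<^sub>F x in F.
           ln_mono_eig (k1 x) (a x) (b x) = (1 + h x) * ln_mono_eig (k2 x) (a x) (b x))"
proof (intro exI conjI)
  show "((\<lambda>x. k1 x / k2 x - 1) \<longlongrightarrow> 0) F"
    using tendsto_diff[OF tendsto_divide[OF assms] tendsto_const, of 1] assms(3) by simp
  show "\<forall>\<^sub>F x in F. ln_mono_eig (k1 x) (a x) (b x)
          = (1 + (k1 x / k2 x - 1)) * ln_mono_eig (k2 x) (a x) (b x)"
    using tendsto_imp_eventually_ne[OF assms(2,3)]
    by eventually_elim (simp add: ln_mono_eig_def char_number_def)
qed

lemma antipodal_points_tend_to_zero_in_cone:
  fixes \<alpha>0 \<alpha>1 :: "real \<Rightarrow> complex" and c :: real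
  assumes "continuous_on {0..} \<alpha>0" and "\<alpha>0 0 = 0" and "\<And>\<epsilon>. \<alpha>1 \<epsilon> = - \<alpha>0 \<epsilon>"
    and "\<And>\<epsilon>. \<epsilon> > 0 \<Longrightarrow> Im (\<alpha>0 \<epsilon>) > 0"
    and "\<And>\<epsilon>. \<epsilon> > 0 \<Longrightarrow> \<bar>Im (\<alpha>0 \<epsilon> - \<alpha>1 \<epsilon>)\<bar> \<ge> c * cmod (\<alpha>0 \<epsilon> - \<alpha>1 \<epsilon>)"
  shows "((\<lambda>\<epsilon>. \<alpha>0 \<epsilon> - \<alpha>1 \<epsilon>) \<longlongrightarrow> 0) (at_right 0)"
    and "\<forall>\<^sub>F \<epsilon> in at_right 0. \<alpha>0 \<epsilon> \<noteq> \<alpha>1 \<epsilon>"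
    and "\<forall>\<^sub>F \<epsilon> in at_right 0. Im (\<alpha>0 \<epsilon> - \<alpha>1 \<epsilon>) \<ge> c * cmod (\<alpha>0 \<epsilon> - \<alpha>1 \<epsilon>)"
proof -
  have "(\<alpha>0 \<longlongrightarrow> \<alpha>0 0) (at 0 within {0..})"
    using assms(1) by (simp add: continuous_on_def)
  then have "(\<alpha>0 \<longlongrightarrow> 0) (at_right 0)"
    unfolding assms(2) by (rule tendsto_within_subset) auto
  then show "((\<lambda>\<epsilon>. \<alpha>0 \<epsilon> - \<alpha>1 \<epsilon>) \<longlongrightarrow> 0) (at_right 0)"
    unfolding assms(3) diff_minus_eq_add using tendsto_add_zero by blast
  have Im_pos: "Im (\<alpha>0 \<epsilon> - \<alpha>1 \<epsilon>) > 0" if "\<epsilon> > 0" for \<epsilon>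
    using assms(4)[OF that] by (simp add: assms(3))
  show "\<forall>\<^sub>F \<epsilon> in at_right 0. \<alpha>0 \<epsilon> \<noteq> \<alpha>1 \<epsilon>"
    using eventually_at_right_less by (rule eventually_mono) (use Im_pos in force)
  show "\<forall>\<^sub>F \<epsilon> in at_right 0. Im (\<alpha>0 \<epsilon> - \<alpha>1 \<epsilon>) \<ge> c * cmod (\<alpha>0 \<epsilon> - \<alpha>1 \<epsilon>)"
    using eventually_at_right_less by (rule eventually_mono) (metis Im_pos assms(5) abs_of_pos)
qed

theorem proposition3p3:
  fixes A :: "complex \<Rightarrow> real \<Rightarrow> complex^2^2"
    and \<alpha>0 \<alpha>1 :: "real \<Rightarrow> complex"
    and \<kappa>01 \<kappa>02 \<kappa>11 \<kappa>12 :: "real \<Rightarrow> complex"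
  assumes holo: "\<And>\<epsilon> i j. \<epsilon> \<ge> 0 \<Longrightarrow> (\<lambda>t. A t \<epsilon> $ i $ j) holomorphic_on cball 0 1"
    and cont: "continuous_on (cball 0 1 \<times> {0..}) (\<lambda>(t, \<epsilon>). A t \<epsilon>)"
    and A00: "A 0 0 $ 1 $ 1 = 1" "A 0 0 $ 1 $ 2 = 0" "A 0 0 $ 2 $ 1 = 0" "A 0 0 $ 2 $ 2 = -1"
    and cont\<alpha>: "continuous_on {0..} \<alpha>0" "continuous_on {0..} \<alpha>1"
    and sum\<alpha>: "\<And>\<epsilon>. \<alpha>0 \<epsilon> + \<alpha>1 \<epsilon> = 0"
    and \<alpha>zero: "\<alpha>0 0 = 0" "\<alpha>1 0 = 0"
    and \<alpha>ne: "\<And>\<epsilon>. \<epsilon> > 0 \<Longrightarrow> \<alpha>0 \<epsilon> \<noteq> \<alpha>1 \<epsilon>"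
    and generic: "\<exists>c>0. \<forall>\<epsilon>>0. \<bar>Im (\<alpha>0 \<epsilon> - \<alpha>1 \<epsilon>)\<bar> \<ge> c * cmod (\<alpha>0 \<epsilon> - \<alpha>1 \<epsilon>)"
    and Im\<alpha>0: "\<And>\<epsilon>. \<epsilon> > 0 \<Longrightarrow> Im (\<alpha>0 \<epsilon>) > 0"
    and eig0: "\<And>\<epsilon>. \<epsilon> > 0 \<Longrightarrow> eigenvalues2 (A (\<alpha>0 \<epsilon>) \<epsilon>) (\<kappa>01 \<epsilon>) (\<kappa>02 \<epsilon>)"
    and eig1: "\<And>\<epsilon>. \<epsilon> > 0 \<Longrightarrow> eigenvalues2 (A (\<alpha>1 \<epsilon>) \<epsilon>) (\<kappa>11 \<epsilon>) (\<kappa>12 \<epsilon>)"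
    and num: "(\<kappa>01 \<longlongrightarrow> 1) (at_right 0)" "(\<kappa>02 \<longlongrightarrow> -1) (at_right 0)"
             "(\<kappa>11 \<longlongrightarrow> 1) (at_right 0)" "(\<kappa>12 \<longlongrightarrow> -1) (at_right 0)"
  shows "filterlim (\<lambda>\<epsilon>. mono_eig (\<kappa>01 \<epsilon>) (\<alpha>0 \<epsilon>) (\<alpha>1 \<epsilon>)) at_infinity (at_right 0)
       \<and> filterlim (\<lambda>\<epsilon>. mono_eig (\<kappa>12 \<epsilon>) (\<alpha>1 \<epsilon>) (\<alpha>0 \<epsilon>)) at_infinity (at_right 0)
       \<and> ((\<lambda>\<epsilon>. mono_eig (\<kappa>02 \<epsilon>) (\<alpha>0 \<epsilon>) (\<alpha>1 \<epsilon>)) \<longlongrightarrow> 0) (at_right 0)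
       \<and> ((\<lambda>\<epsilon>. mono_eig (\<kappa>11 \<epsilon>) (\<alpha>1 \<epsilon>) (\<alpha>0 \<epsilon>)) \<longlongrightarrow> 0) (at_right 0)
       \<and> (\<exists>h. (h \<longlongrightarrow> 0) (at_right 0) \<and> (\<forall>\<^sub>F \<epsilon> in at_right 0.
            ln_mono_eig (\<kappa>01 \<epsilon>) (\<alpha>0 \<epsilon>) (\<alpha>1 \<epsilon>)
              = - (1 + h \<epsilon>) * ln_mono_eig (\<kappa>02 \<epsilon>) (\<alpha>0 \<epsilon>) (\<alpha>1 \<epsilon>)))
       \<and> (\<exists>h. (h \<longlongrightarrow> 0) (at_right 0) \<and> (\<forall>\<^sub>F \<epsilon> in at_right 0.
            ln_mono_eig (\<kappa>01 \<epsilon>) (\<alpha>0 \<epsilon>) (\<alpha>1 \<epsilon>)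
              = - (1 + h \<epsilon>) * ln_mono_eig (\<kappa>11 \<epsilon>) (\<alpha>1 \<epsilon>) (\<alpha>0 \<epsilon>)))
       \<and> (\<exists>h. (h \<longlongrightarrow> 0) (at_right 0) \<and> (\<forall>\<^sub>F \<epsilon> in at_right 0.
            ln_mono_eig (\<kappa>01 \<epsilon>) (\<alpha>0 \<epsilon>) (\<alpha>1 \<epsilon>)
              = (1 + h \<epsilon>) * ln_mono_eig (\<kappa>12 \<epsilon>) (\<alpha>1 \<epsilon>) (\<alpha>0 \<epsilon>)))"
proof -
  let ?F = "at_right (0::real)"
  obtain c where "c > 0" and c: "\<And>\<epsilon>. \<epsilon> > 0 \<Longrightarrow> \<bar>Im (\<alpha>0 \<epsilon> - \<alpha>1 \<epsilon>)\<bar> \<ge> c * cmod (\<alpha>0 \<epsilon> - \<alpha>1 \<epsilon>)"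
    using generic by blast
  have \<alpha>1_eq: "\<alpha>1 \<epsilon> = - \<alpha>0 \<epsilon>" for \<epsilon>
    using sum\<alpha>[of \<epsilon>] by (simp only: add_eq_0_iff)
  note cone_limits = antipodal_points_tend_to_zero_in_cone[OF cont\<alpha>(1) \<alpha>zero(1) \<alpha>1_eq Im\<alpha>0 c]
  have Re_at_top: "filterlim (\<lambda>\<epsilon>. Re (ln_mono_eig (k \<epsilon>) (\<alpha>0 \<epsilon>) (\<alpha>1 \<epsilon>))) at_top ?F"
    if "(k \<longlongrightarrow> 1) ?F" for k
    by (rule filterlim_Re_ln_mono_eig_at_top[OF \<open>c > 0\<close> that cone_limits])
  have neg: "((\<lambda>\<epsilon>. - k \<epsilon>) \<longlongrightarrow> 1) ?F" if "(k \<longlongrightarrow> -1) ?F" for k :: "real \<Rightarrow> complex"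
    using tendsto_minus[OF that] by simp
  note swap = mono_eig_swap[of _ "\<alpha>1 _" "\<alpha>0 _"] ln_mono_eig_swap[of _ "\<alpha>1 _" "\<alpha>0 _"]
  have "filterlim (\<lambda>\<epsilon>. mono_eig (\<kappa>01 \<epsilon>) (\<alpha>0 \<epsilon>) (\<alpha>1 \<epsilon>)) at_infinity ?F"
    unfolding mono_eig_eq_exp_ln_mono_eig
    by (rule filterlim_exp_at_infinity_if_Re_at_top[OF Re_at_top[OF num(1)]])
  moreover have "filterlim (\<lambda>\<epsilon>. mono_eig (\<kappa>12 \<epsilon>) (\<alpha>1 \<epsilon>) (\<alpha>0 \<epsilon>)) at_infinity ?F"
    unfolding swap mono_eig_eq_exp_ln_mono_eig
    by (rule filterlim_exp_at_infinity_if_Re_at_top[OF Re_at_top[OF neg[OF num(4)]]])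
  moreover have "((\<lambda>\<epsilon>. mono_eig (\<kappa>02 \<epsilon>) (\<alpha>0 \<epsilon>) (\<alpha>1 \<epsilon>)) \<longlongrightarrow> 0) ?F"
    using tendsto_exp_zero_if_Re_at_top[OF Re_at_top[OF neg[OF num(2)]]]
    by (simp add: mono_eig_eq_exp_ln_mono_eig ln_mono_eig_uminus)
  moreover have "((\<lambda>\<epsilon>. mono_eig (\<kappa>11 \<epsilon>) (\<alpha>1 \<epsilon>) (\<alpha>0 \<epsilon>)) \<longlongrightarrow> 0) ?F"
    unfolding swap using tendsto_exp_zero_if_Re_at_top[OF Re_at_top[OF num(3)]]
    by (simp add: mono_eig_eq_exp_ln_mono_eig ln_mono_eig_uminus)
  moreover note
    ln_mono_eig_asymp_proportional[OF num(1) neg[OF num(2)] one_neq_zero, of \<alpha>0 \<alpha>1]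
    ln_mono_eig_asymp_proportional[OF num(1) num(3) one_neq_zero, of \<alpha>0 \<alpha>1]
    ln_mono_eig_asymp_proportional[OF num(1) neg[OF num(4)] one_neq_zero, of \<alpha>0 \<alpha>1]
  ultimately show ?thesis
    unfolding swap ln_mono_eig_uminus mult_minus_left mult_minus_right minus_minus
    by - (intro conjI; assumption)
qed

end
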